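(* Let $\alpha,\beta,\gamma>0$ and let $A$ map $C[0,1]$ into functions on $[0,1]$. (a) If $A$ maps $C[0,1]$ into $C^\gamma_{per}$ and $\sup_{u\in C[0,1]}\|A(u)\|_{C^\gamma}\le\kappa'_3$, then there is $\kappa_3$ depending on $\kappa'_3$ and $\gamma$ such that $|\langle A(u)^2,e_k\rangle|\le\kappa_3/(1+(k+1)^\gamma)$ for all $u\in C[0,1]$ and $k\ge0$. (b) If for all $u,v\in C[0,1]$, $$\|A(u)-A(v)\|_2\le\kappa'_1\sup_{\varphi\in C^{\beta/\alpha}_{per},\ \|\varphi\|_{C^{\beta/\alpha}}\le1}|\langle u-v,\varphi\rangle|^\alpha,$$ then $u_n\to u$ in $C[0,1]$ implies $\|A(u_n)-A(u)\|_2\to0$, and there is $\kappa_1$ depending on $\kappa'_1,\alpha,\beta$ such that $\|A(u+he_k)-A(u)\|_2\le\kappa_1|h|^\alpha(k+1)^{-\beta}$ for all $u\in C[0,1]$, $k\ge0$, $h\in\mathbb{R}$.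
   Context: $\langle\cdot,\cdot\rangle$, $\|\cdot\|_2$: $L^2[0,1]$ inner product and norm; $e_0\equiv1$, $e_k(x)=\sqrt2\cos(k\pi x)$, $k\ge1$. For $\zeta=k+\delta$, $k\in\mathbb{Z}_+$, $\delta\in[0,1)$: $\|u\|_{C^\zeta}=\sum_{i=0}^k\|u^{(i)}\|_\infty+1_{(\delta>0)}\sup_{x\ne y\in[0,1]}|u^{(k)}(y)-u^{(k)}(x)|/|y-x|^\delta$, $C^\zeta=\{u\in C^k[0,1]:\|u\|_{C^\zeta}<\infty\}$, and $C^\zeta_{per}$ is the set of $f\in C^\zeta[0,1]$ whose even 2-periodic extension to $\mathbb{R}$ (i.e. $\overline f(-x)=f(x)$ on $(0,1]$, $\overline f(x+2)=\overline f(x)$) lies in $C^\zeta(\mathbb{R})$. *)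

theory Defs
  imports "HOL-Analysis.Analysis"
begin

text \<open>Functions on [0,1] are represented as total functions real => real;
only their values on [0,1] (resp. on the relevant set S) matter.\<close>

definition l2_inner :: "(real \<Rightarrow> real) \<Rightarrow> (real \<Rightarrow> real) \<Rightarrow> real" where
  "l2_inner f g = integral {0..1} (\<lambda>x. f x * g x)"

definition l2_norm :: "(real \<Rightarrow> real) \<Rightarrow> real" where
  "l2_norm f = sqrt (integral {0..1} (\<lambda>x. (f x)^2))"

definition ebasis :: "nat \<Rightarrow> real \<Rightarrow> real" where
  "ebasis k x = (if k = 0 then 1 else sqrt 2 * cos (real k * pi * x))"

fun hder :: "real set \<Rightarrow> nat \<Rightarrow> (real \<Rightarrow> real) \<Rightarrow> real \<Rightarrow> real" where
  "hder S 0 u = u"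
| "hder S (Suc i) u = (\<lambda>x. vector_derivative (hder S i u) (at x within S))"

definition Ck_on :: "real set \<Rightarrow> nat \<Rightarrow> (real \<Rightarrow> real) \<Rightarrow> bool" where
  "Ck_on S k u \<longleftrightarrow> (\<forall>i\<le>k. continuous_on S (hder S i u)) \<and>
     (\<forall>i<k. \<forall>x\<in>S. hder S i u differentiable (at x within S))"

definition sup_norm_on :: "real set \<Rightarrow> (real \<Rightarrow> real) \<Rightarrow> ereal" where
  "sup_norm_on S f = (SUP x\<in>S. ereal \<bar>f x\<bar>)"

definition holder_semi :: "real set \<Rightarrow> real \<Rightarrow> (real \<Rightarrow> real) \<Rightarrow> ereal" where
  "holder_semi S d g =
     (SUP p\<in>{(x, y). x \<in> S \<and> y \<in> S \<and> x \<noteq> y}.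
        ereal (\<bar>g (snd p) - g (fst p)\<bar> / \<bar>snd p - fst p\<bar> powr d))"

text \<open>C^zeta norm on S, zeta = k + delta with k = floor zeta, delta = frac zeta (value in ereal,
  so that finiteness is meaningful).\<close>
definition holder_norm_on :: "real set \<Rightarrow> real \<Rightarrow> (real \<Rightarrow> real) \<Rightarrow> ereal" where
  "holder_norm_on S \<zeta> u =
     (\<Sum>i\<le>nat \<lfloor>\<zeta>\<rfloor>. sup_norm_on S (hder S i u)) +
     (if frac \<zeta> > 0 then holder_semi S (frac \<zeta>) (hder S (nat \<lfloor>\<zeta>\<rfloor>) u) else 0)"

definition Holder_on :: "real set \<Rightarrow> real \<Rightarrow> (real \<Rightarrow> real) set" where
  "Holder_on S \<zeta> = {u. Ck_on S (nat \<lfloor>\<zeta>\<rfloor>) u \<and> holder_norm_on S \<zeta> u < \<infinity>}"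

definition holder_norm :: "real \<Rightarrow> (real \<Rightarrow> real) \<Rightarrow> ereal" where
  "holder_norm \<zeta> u = holder_norm_on {0..1} \<zeta> u"

text \<open>Even 2-periodic extension of a function on [0,1].\<close>
definition even_per_ext :: "(real \<Rightarrow> real) \<Rightarrow> real \<Rightarrow> real" where
  "even_per_ext f x = f \<bar>x - 2 * real_of_int \<lfloor>(x + 1) / 2\<rfloor>\<bar>"

definition Cper :: "real \<Rightarrow> (real \<Rightarrow> real) set" where
  "Cper \<zeta> = {f \<in> Holder_on {0..1} \<zeta>. even_per_ext f \<in> Holder_on UNIV \<zeta>}"

end

theory Submission
  imports Defs
begin

text \<open>Both parts rest on one estimate: if \<open>f\<close> has \<open>m\<close> derivatives on \<open>[0,1]\<close>, all bounded
  by \<open>M\<close>, the \<open>m\<close>-th one \<open>\<delta>\<close>-Holder with constant \<open>M\<close>, and the odd derivatives vanish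
  at 0 and 1, then \<open>|\<langle>f, e\<^sub>k\<rangle>| \<le> 3 \<cdot> 2\<^sup>\<zeta> M (k+1)\<^sup>-\<^sup>\<zeta>\<close> with \<open>\<zeta> = m + \<delta>\<close>.
  Integrating by parts \<open>m\<close> times against \<open>cos(k\<pi>x)\<close> gains \<open>(k\<pi>)\<^sup>-\<^sup>m\<close>, the boundary terms
  being exactly the odd derivatives; comparing the last integral with its shift by the half-period
  \<open>1/k\<close> gains \<open>k\<^sup>-\<^sup>\<delta>\<close>. Membership in \<open>C\<^sup>\<zeta>\<^sub>p\<^sub>e\<^sub>r\<close> provides these hypotheses, since
  the even 2-periodic extension is symmetric about 0 and about 1.

  For (a) the hypotheses pass from \<open>A(u)\<close> to \<open>A(u)\<^sup>2\<close> by the Leibniz rule. For (b) they hold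
  for every \<open>\<phi>\<close> in the unit ball of \<open>C\<^sup>\<beta>\<^sup>/\<^sup>\<alpha>\<^sub>p\<^sub>e\<^sub>r\<close>, which bounds
  \<open>|\<langle>h e\<^sub>k, \<phi>\<rangle>|\<^sup>\<alpha>\<close> by a constant times \<open>|h|\<^sup>\<alpha> (k+1)\<^sup>-\<^sup>\<beta>\<close>; continuity follows
  from \<open>|\<langle>u - v, \<phi>\<rangle>| \<le> sup |u - v|\<close> on that ball.\<close>

section \<open>Iterated derivatives and the Leibniz rule\<close>

lemma hder_has_vector_derivative:
  assumes "Ck_on S m u" "i < m" "x \<in> S"
  shows "(hder S i u has_vector_derivative hder S (Suc i) u x) (at x within S)"
  using assms unfolding Ck_on_def by (simp add: vector_derivative_works[symmetric])

lemma hder_Suc_eqI: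
  assumes "(hder S j f has_vector_derivative D) (at x within S)" "at x within S \<noteq> bot"
  shows "hder S (Suc j) f x = D"
  using vector_derivative_within[OF assms(2,1)] by simp

lemma at_within_Icc_nontrivial: "a < b \<Longrightarrow> x \<in> {a..b::real} \<Longrightarrow> at x within {a..b} \<noteq> bot"
  using trivial_limit_within islimpt_Icc by blast

definition leibniz_sum :: "(nat \<Rightarrow> real \<Rightarrow> real) \<Rightarrow> (nat \<Rightarrow> real \<Rightarrow> real) \<Rightarrow> nat \<Rightarrow> real \<Rightarrow> real" where
  "leibniz_sum U V j y = (\<Sum>i\<le>j. real (j choose i) * (U i y * V (j - i) y))"

lemma leibniz_sum_Suc:
  fixes a b :: "nat \<Rightarrow> real"
  shows "(\<Sum>i\<le>j. real (j choose i) * (a (Suc i) * b (j - i) + a i * b (Suc j - i)))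
       = (\<Sum>i\<le>Suc j. real (Suc j choose i) * (a i * b (Suc j - i)))"
proof -
  have "(\<Sum>i\<le>Suc j. real (Suc j choose i) * (a i * b (Suc j - i)))
     = a 0 * b (Suc j) + (\<Sum>i\<le>j. real (Suc j choose Suc i) * (a (Suc i) * b (j - i)))"
    by (subst sum.atMost_Suc_shift) simp
  also have "(\<Sum>i\<le>j. real (Suc j choose Suc i) * (a (Suc i) * b (j - i)))
     = (\<Sum>i\<le>j. real (j choose i) * (a (Suc i) * b (j - i)))
       + (\<Sum>i<j. real (j choose Suc i) * (a (Suc i) * b (Suc j - Suc i)))"
    by (simp add: sum.distrib[symmetric] algebra_simps lessThan_Suc_atMost[symmetric])
  moreover have "(\<Sum>i\<le>j. real (j choose i) * (a i * b (Suc j - i)))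
     = a 0 * b (Suc j) + (\<Sum>i<j. real (j choose Suc i) * (a (Suc i) * b (Suc j - Suc i)))"
    by (simp only: sum.atMost_shift) simp
  ultimately show ?thesis
    by (simp add: sum.distrib algebra_simps)
qed

lemma leibniz_sum_has_vector_derivative:
  assumes dU: "\<And>i. i \<le> j \<Longrightarrow> (U i has_vector_derivative U (Suc i) x) (at x within S)"
    and dV: "\<And>i. i \<le> j \<Longrightarrow> (V i has_vector_derivative V (Suc i) x) (at x within S)"
  shows "(leibniz_sum U V j has_vector_derivative leibniz_sum U V (Suc j) x) (at x within S)"
proof -
  have "((\<lambda>y. U i y * V (j - i) y) has_real_derivative
          U (Suc i) x * V (j - i) x + U i x * V (Suc j - i) x) (at x within S)" if "i \<le> j" for i
  proof -
    have "(U i has_real_derivative U (Suc i) x) (at x within S)"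
         "(V (j - i) has_real_derivative V (Suc (j - i)) x) (at x within S)"
      using dU[of i] dV[of "j - i"] that by (simp_all add: has_real_derivative_iff_has_vector_derivative)
    from DERIV_mult[OF this] show ?thesis
      using that by (simp add: Suc_diff_le algebra_simps)
  qed
  then have "((\<lambda>y. \<Sum>i\<le>j. real (j choose i) * (U i y * V (j - i) y)) has_real_derivative
      (\<Sum>i\<le>j. real (j choose i) * (U (Suc i) x * V (j - i) x + U i x * V (Suc j - i) x))) (at x within S)"
    by (intro DERIV_sum DERIV_cmult) simp
  then show ?thesis
    unfolding leibniz_sum_def has_real_derivative_iff_has_vector_derivative
      leibniz_sum_Suc[where a="\<lambda>i. U i x" and b="\<lambda>i. V i x", symmetric] .
qed

lemma hder_mult:
  assumes S: "\<And>x. x \<in> S \<Longrightarrow> at x within S \<noteq> bot"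
    and u: "Ck_on S m u" and v: "Ck_on S m v" and "j \<le> m" "x \<in> S"
  shows "hder S j (\<lambda>y. u y * v y) x = leibniz_sum (\<lambda>i. hder S i u) (\<lambda>i. hder S i v) j x"
  using assms(4,5)
proof (induction j arbitrary: x)
  case 0
  then show ?case by (simp add: leibniz_sum_def)
next
  case (Suc j)
  let ?L = "leibniz_sum (\<lambda>i. hder S i u) (\<lambda>i. hder S i v)"
  have "(?L j has_vector_derivative ?L (Suc j) x) (at x within S)"
    using Suc.prems by (intro leibniz_sum_has_vector_derivative hder_has_vector_derivative[OF u]
        hder_has_vector_derivative[OF v]) auto
  then have "(hder S j (\<lambda>y. u y * v y) has_vector_derivative ?L (Suc j) x) (at x within S)"
    by (rule has_vector_derivative_transform_within[where d=1]) (use Suc in auto)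
  then show ?case
    using hder_Suc_eqI S Suc.prems by blast
qed

lemma Ck_on_mult:
  assumes S: "\<And>x. x \<in> S \<Longrightarrow> at x within S \<noteq> bot"
    and u: "Ck_on S m u" and v: "Ck_on S m v"
  shows "Ck_on S m (\<lambda>y. u y * v y)"
  unfolding Ck_on_def
proof (intro conjI allI impI ballI)
  let ?L = "leibniz_sum (\<lambda>i. hder S i u) (\<lambda>i. hder S i v)"
  fix j assume j: "j \<le> m"
  have "continuous_on S (?L j)"
    unfolding leibniz_sum_def using u v j
    by (intro continuous_intros) (auto simp: Ck_on_def)
  then show "continuous_on S (hder S j (\<lambda>y. u y * v y))"
    by (rule continuous_on_cong[THEN iffD1, rotated 2]) (use hder_mult[OF S u v j] in auto)
next
  let ?L = "leibniz_sum (\<lambda>i. hder S i u) (\<lambda>i. hder S i v)"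
  fix j x assume j: "j < m" and x: "x \<in> S"
  have "(?L j has_vector_derivative ?L (Suc j) x) (at x within S)"
    using j x by (intro leibniz_sum_has_vector_derivative hder_has_vector_derivative[OF u]
        hder_has_vector_derivative[OF v]) auto
  then have "(hder S j (\<lambda>y. u y * v y) has_vector_derivative ?L (Suc j) x) (at x within S)"
    by (rule has_vector_derivative_transform_within[where d=1]) (use hder_mult[OF S u v] j x in auto)
  then show "hder S j (\<lambda>y. u y * v y) differentiable at x within S"
    by (rule differentiableI_vector)
qed

lemma abs_leibniz_sum_le:
  assumes "\<And>i. i \<le> m \<Longrightarrow> \<bar>U i x\<bar> \<le> K" "\<And>i. i \<le> m \<Longrightarrow> \<bar>V i x\<bar> \<le> L"
  shows "\<bar>leibniz_sum U V m x\<bar> \<le> 2 ^ m * K * L"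
proof -
  have K: "0 \<le> K" using assms(1)[of 0] by auto
  have "\<bar>leibniz_sum U V m x\<bar> \<le> (\<Sum>i\<le>m. \<bar>real (m choose i) * (U i x * V (m - i) x)\<bar>)"
    unfolding leibniz_sum_def by (rule sum_abs)
  also have "\<dots> \<le> (\<Sum>i\<le>m. real (m choose i) * (K * L))"
  proof (rule sum_mono)
    fix i assume "i \<in> {..m}"
    then have "\<bar>U i x\<bar> \<le> K" "\<bar>V (m - i) x\<bar> \<le> L"
      using assms by auto
    then have "\<bar>U i x\<bar> * \<bar>V (m - i) x\<bar> \<le> K * L"
      using K by (intro mult_mono) auto
    then show "\<bar>real (m choose i) * (U i x * V (m - i) x)\<bar> \<le> real (m choose i) * (K * L)"
      by (simp add: abs_mult mult_left_mono)
  qed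
  also have "\<dots> = 2 ^ m * K * L"
    by (simp add: sum_distrib_right[symmetric] of_nat_sum[symmetric] choose_row_sum del: of_nat_sum)
  finally show ?thesis .
qed

lemma abs_leibniz_sum_diff_le:
  assumes U: "\<And>i. i \<le> m \<Longrightarrow> \<bar>U i y\<bar> \<le> K" "\<And>i. i \<le> m \<Longrightarrow> \<bar>U i y - U i x\<bar> \<le> K * r"
    and V: "\<And>i. i \<le> m \<Longrightarrow> \<bar>V i x\<bar> \<le> L" "\<And>i. i \<le> m \<Longrightarrow> \<bar>V i y - V i x\<bar> \<le> L * r"
    and "0 \<le> r"
  shows "\<bar>leibniz_sum U V m y - leibniz_sum U V m x\<bar> \<le> 2 ^ (m + 1) * K * L * r"
proof -
  have K: "0 \<le> K" and L: "0 \<le> L"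
    using U(1)[of 0] V(1)[of 0] by auto
  have "\<bar>leibniz_sum U V m y - leibniz_sum U V m x\<bar>
      \<le> (\<Sum>i\<le>m. \<bar>real (m choose i) * (U i y * V (m - i) y - U i x * V (m - i) x)\<bar>)"
    unfolding leibniz_sum_def sum_subtractf[symmetric] right_diff_distrib[symmetric] by (rule sum_abs)
  also have "\<dots> \<le> (\<Sum>i\<le>m. real (m choose i) * (2 * K * L * r))"
  proof (rule sum_mono)
    fix i assume i: "i \<in> {..m}"
    have uv: "\<bar>U i y\<bar> * \<bar>V (m - i) y - V (m - i) x\<bar> \<le> K * (L * r)"
      using U(1)[of i] V(2)[of "m - i"] i K by (intro mult_mono) auto
    have vu: "\<bar>V (m - i) x\<bar> * \<bar>U i y - U i x\<bar> \<le> L * (K * r)"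
      using V(1)[of "m - i"] U(2)[of i] i L by (intro mult_mono) auto
    have "U i y * V (m - i) y - U i x * V (m - i) x
        = U i y * (V (m - i) y - V (m - i) x) + V (m - i) x * (U i y - U i x)"
      by (simp add: algebra_simps)
    then have "\<bar>U i y * V (m - i) y - U i x * V (m - i) x\<bar>
        \<le> \<bar>U i y\<bar> * \<bar>V (m - i) y - V (m - i) x\<bar> + \<bar>V (m - i) x\<bar> * \<bar>U i y - U i x\<bar>"
      by (metis abs_mult abs_triangle_ineq)
    also have "\<dots> \<le> 2 * K * L * r"
      using uv vu by (simp add: algebra_simps)
    finally have "\<bar>U i y * V (m - i) y - U i x * V (m - i) x\<bar> \<le> 2 * K * L * r" .
    then show "\<bar>real (m choose i) * (U i y * V (m - i) y - U i x * V (m - i) x)\<bar>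
             \<le> real (m choose i) * (2 * K * L * r)"
      by (simp add: abs_mult mult_left_mono)
  qed
  also have "\<dots> = 2 ^ (m + 1) * K * L * r"
    by (simp add: sum_distrib_right[symmetric] of_nat_sum[symmetric] choose_row_sum del: of_nat_sum)
  finally show ?thesis .
qed

lemma leibniz_sum_odd_eq_0:
  assumes "\<And>i. i \<le> j \<Longrightarrow> odd i \<Longrightarrow> U i p = 0" "\<And>i. i \<le> j \<Longrightarrow> odd i \<Longrightarrow> V i p = 0" "odd j"
  shows "leibniz_sum U V j p = 0"
  unfolding leibniz_sum_def
proof (rule sum.neutral, rule ballI)
  fix i assume "i \<in> {..j}"
  then have "i \<le> j" by simp
  have "U i p = 0 \<or> V (j - i) p = 0"
  proof (cases "odd i")
    case False
    then have "odd (j - i)" using \<open>odd j\<close> \<open>i \<le> j\<close> by auto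
    then show ?thesis using assms(2)[of "j - i"] by simp
  qed (use assms(1) \<open>i \<le> j\<close> in simp)
  then show "real (j choose i) * (U i p * V (j - i) p) = 0"
    by auto
qed

section \<open>Holder data with vanishing odd boundary derivatives\<close>

lemma abs_diff_le_by_derivative_bound:
  fixes u u' :: "real \<Rightarrow> real"
  assumes "convex S"
    and "\<And>x. x \<in> S \<Longrightarrow> (u has_vector_derivative u' x) (at x within S)"
    and "\<And>x. x \<in> S \<Longrightarrow> \<bar>u' x\<bar> \<le> K"
    and "x \<in> S" "y \<in> S"
  shows "\<bar>u y - u x\<bar> \<le> K * \<bar>y - x\<bar>"
proof -
  have "norm (u y - u x) \<le> K * norm (y - x)"
  proof (rule differentiable_bound[of S u "\<lambda>x h. h *\<^sub>R u' x" K y x])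
    show "(u has_derivative (\<lambda>h. h *\<^sub>R u' z)) (at z within S)" if "z \<in> S" for z
      using assms(2)[OF that] by (simp add: has_vector_derivative_def)
    show "onorm (\<lambda>h. h *\<^sub>R u' z) \<le> K" if "z \<in> S" for z
      using assms(3)[OF that] onorm_scaleR_left[OF bounded_linear_ident, of "u' z"]
      by (simp add: onorm_id)
  qed (use assms in auto)
  then show ?thesis by simp
qed

text \<open>What the cosine coefficients see of \<open>f \<in> Cper (m + \<delta>)\<close> with \<open>holder_norm \<le> M\<close>: of the
  regularity of the even 2-periodic extension only the vanishing of the odd derivatives of \<open>f\<close>
  at 0 and 1 survives.\<close>

definition Holder_Neumann :: "nat \<Rightarrow> real \<Rightarrow> real \<Rightarrow> (real \<Rightarrow> real) \<Rightarrow> bool" where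
  "Holder_Neumann m \<delta> M f \<longleftrightarrow> Ck_on {0..1} m f \<and>
     (\<forall>j<m. odd j \<longrightarrow> hder {0..1} j f 0 = 0 \<and> hder {0..1} j f 1 = 0) \<and>
     (\<forall>i\<le>m. \<forall>x\<in>{0..1}. \<bar>hder {0..1} i f x\<bar> \<le> M) \<and>
     (0 < \<delta> \<longrightarrow> (\<forall>x\<in>{0..1}. \<forall>y\<in>{0..1}.
        \<bar>hder {0..1} m f y - hder {0..1} m f x\<bar> \<le> M * \<bar>y - x\<bar> powr \<delta>))"

lemma Holder_Neumann_hder_holder:
  assumes f: "Holder_Neumann m \<delta> K f" and \<delta>: "0 < \<delta>" "\<delta> \<le> 1"
    and "i \<le> m" and x: "x \<in> {0..1}" and y: "y \<in> {0..1}"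
  shows "\<bar>hder {0..1} i f y - hder {0..1} i f x\<bar> \<le> K * \<bar>y - x\<bar> powr \<delta>"
proof (cases "i = m")
  case True
  then show ?thesis
    using f \<delta> x y by (simp add: Holder_Neumann_def)
next
  case False
  have C: "Ck_on {0..1} m f" and bnd: "\<bar>hder {0..1} (Suc i) f z\<bar> \<le> K" if "z \<in> {0..1}" for z
    using f False \<open>i \<le> m\<close> that by (auto simp: Holder_Neumann_def simp del: hder.simps)
  have "\<bar>hder {0..1} i f y - hder {0..1} i f x\<bar> \<le> K * \<bar>y - x\<bar>"
    by (rule abs_diff_le_by_derivative_bound[where S = "{0..1}"])
      (use hder_has_vector_derivative[OF C, where i = i] bnd False \<open>i \<le> m\<close> x y
        in \<open>auto simp del: hder.simps\<close>)
  moreover have "\<bar>y - x\<bar> \<le> \<bar>y - x\<bar> powr \<delta>"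
    using powr_mono'[of \<delta> 1 "\<bar>y - x\<bar>"] \<delta> x y by (cases "x = y") auto
  moreover have "0 \<le> K"
    using f x by (force simp: Holder_Neumann_def)
  ultimately show ?thesis
    by (meson mult_left_mono order_trans)
qed

lemma Holder_Neumann_square:
  assumes f: "Holder_Neumann m \<delta> K f" and "\<delta> \<le> 1"
  shows "Holder_Neumann m \<delta> (2 ^ (m + 1) * K\<^sup>2) (\<lambda>x. f x * f x)"
proof -
  let ?S = "{0..1::real}" and ?U = "\<lambda>i. hder {0..1} i f"
  have S: "\<And>x. x \<in> ?S \<Longrightarrow> at x within ?S \<noteq> bot"
    by (rule at_within_Icc_nontrivial) simp
  have C: "Ck_on ?S m f" and odd: "\<And>j. j < m \<Longrightarrow> odd j \<Longrightarrow> ?U j 0 = 0 \<and> ?U j 1 = 0"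
    and bnd: "\<And>i x. i \<le> m \<Longrightarrow> x \<in> ?S \<Longrightarrow> \<bar>?U i x\<bar> \<le> K"
    using f by (auto simp: Holder_Neumann_def)
  have K: "0 \<le> K" using bnd[of 0 0] by auto
  have sq: "hder ?S j (\<lambda>x. f x * f x) x = leibniz_sum ?U ?U j x" if "j \<le> m" "x \<in> ?S" for j x
    by (rule hder_mult[OF S C C that])
  have "\<bar>leibniz_sum ?U ?U i x\<bar> \<le> 2 ^ (m + 1) * K\<^sup>2" if "i \<le> m" "x \<in> ?S" for i x
  proof -
    have "\<bar>leibniz_sum ?U ?U i x\<bar> \<le> 2 ^ i * K * K"
      by (rule abs_leibniz_sum_le) (use bnd that in auto)
    also have "\<dots> \<le> 2 ^ (m + 1) * K * K"
      using power_increasing[of i "m + 1" "2::real"] that K by (simp add: mult_right_mono)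
    finally show ?thesis
      by (simp add: power2_eq_square mult.assoc)
  qed
  moreover have "\<bar>leibniz_sum ?U ?U m y - leibniz_sum ?U ?U m x\<bar> \<le> 2 ^ (m + 1) * K\<^sup>2 * \<bar>y - x\<bar> powr \<delta>"
    if "0 < \<delta>" "x \<in> ?S" "y \<in> ?S" for x y
    using abs_leibniz_sum_diff_le[of m ?U y K x "\<bar>y - x\<bar> powr \<delta>" ?U K]
      Holder_Neumann_hder_holder[OF f that(1) \<open>\<delta> \<le> 1\<close> _ that(2,3)] bnd that
    by (simp add: power2_eq_square mult.assoc)
  moreover have "leibniz_sum ?U ?U j p = 0" if "j < m" "odd j" "p \<in> {0, 1}" for j p
    by (rule leibniz_sum_odd_eq_0) (use odd that in auto)
  ultimately show ?thesis
    unfolding Holder_Neumann_def using Ck_on_mult[OF S C C] sq by simp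
qed

section \<open>Holder norms and the even periodic extension\<close>

lemma abs_le_sup_norm_on: "x \<in> S \<Longrightarrow> ereal \<bar>g x\<bar> \<le> sup_norm_on S g"
  unfolding sup_norm_on_def by (rule SUP_upper)

lemma sup_norm_on_nonneg: "x \<in> S \<Longrightarrow> 0 \<le> sup_norm_on S g"
  by (rule order_trans[OF _ abs_le_sup_norm_on]) simp_all

lemma holder_quotient_le_holder_semi:
  "x \<in> S \<Longrightarrow> y \<in> S \<Longrightarrow> x \<noteq> y \<Longrightarrow>
     ereal (\<bar>g y - g x\<bar> / \<bar>y - x\<bar> powr d) \<le> holder_semi S d g"
  unfolding holder_semi_def by (rule SUP_upper2[of "(x, y)"]) auto

lemma holder_semi_nonneg: "x \<in> S \<Longrightarrow> y \<in> S \<Longrightarrow> x \<noteq> y \<Longrightarrow> 0 \<le> holder_semi S d g"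
  by (rule order_trans[OF _ holder_quotient_le_holder_semi]) simp_all

lemma holder_norm_bounds_hder:
  assumes "holder_norm \<zeta> f \<le> ereal M" "i \<le> nat \<lfloor>\<zeta>\<rfloor>" "x \<in> {0..1}"
  shows "\<bar>hder {0..1} i f x\<bar> \<le> M"
proof -
  let ?S = "{0..1::real}"
  let ?sum = "\<Sum>i\<le>nat \<lfloor>\<zeta>\<rfloor>. sup_norm_on ?S (hder ?S i f)"
  let ?sem = "if frac \<zeta> > 0 then holder_semi ?S (frac \<zeta>) (hder ?S (nat \<lfloor>\<zeta>\<rfloor>) f) else 0"
  have "0 \<le> ?sem"
    using holder_semi_nonneg[of 0 ?S 1] by simp
  then have "?sum \<le> ?sum + ?sem"
    by (rule add_increasing2) simp
  also have "\<dots> \<le> ereal M"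
    using assms(1) by (simp add: holder_norm_def holder_norm_on_def)
  finally have sum: "?sum \<le> ereal M" .
  have "ereal \<bar>hder ?S i f x\<bar> \<le> sup_norm_on ?S (hder ?S i f)"
    by (rule abs_le_sup_norm_on[OF assms(3)])
  also have "\<dots> \<le> ?sum"
    using assms(2) sup_norm_on_nonneg[of 0 ?S]
    by (intro sum_nonneg_leq_bound[of "{..nat \<lfloor>\<zeta>\<rfloor>}" "\<lambda>i. sup_norm_on ?S (hder ?S i f)"]) auto
  also note sum
  finally show ?thesis by simp
qed

lemma holder_norm_bounds_holder_quotient:
  assumes "holder_norm \<zeta> f \<le> ereal M" "0 < frac \<zeta>" "x \<in> {0..1}" "y \<in> {0..1}"
  shows "\<bar>hder {0..1} (nat \<lfloor>\<zeta>\<rfloor>) f y - hder {0..1} (nat \<lfloor>\<zeta>\<rfloor>) f x\<bar> \<le> M * \<bar>y - x\<bar> powr frac \<zeta>"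
proof (cases "x = y")
  case True
  then show ?thesis
    using holder_norm_bounds_hder[OF assms(1) _ assms(3), of 0] by simp
next
  case False
  let ?S = "{0..1::real}" and ?g = "hder {0..1} (nat \<lfloor>\<zeta>\<rfloor>) f"
  let ?sum = "\<Sum>i\<le>nat \<lfloor>\<zeta>\<rfloor>. sup_norm_on ?S (hder ?S i f)"
  have "ereal (\<bar>?g y - ?g x\<bar> / \<bar>y - x\<bar> powr frac \<zeta>) \<le> holder_semi ?S (frac \<zeta>) ?g"
    by (rule holder_quotient_le_holder_semi[OF assms(3,4) False])
  also have "0 \<le> ?sum"
    using sup_norm_on_nonneg[of 0 ?S] by (intro sum_nonneg) auto
  then have "holder_semi ?S (frac \<zeta>) ?g \<le> ?sum + holder_semi ?S (frac \<zeta>) ?g"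
    by (rule add_increasing) simp
  also have "\<dots> \<le> ereal M"
    using assms(1,2) by (simp add: holder_norm_def holder_norm_on_def)
  finally have "\<bar>?g y - ?g x\<bar> / \<bar>y - x\<bar> powr frac \<zeta> \<le> M" by simp
  then show ?thesis
    using False by (simp add: pos_divide_le_eq mult.commute)
qed

lemma even_per_ext_eq:
  shows "-1 < x \<Longrightarrow> x < 1 \<Longrightarrow> even_per_ext f x = f \<bar>x\<bar>"
    and "1 \<le> x \<Longrightarrow> x < 3 \<Longrightarrow> even_per_ext f x = f \<bar>x - 2\<bar>"
proof -
  assume "-1 < x" "x < 1"
  then have "\<lfloor>(x + 1) / 2\<rfloor> = 0" by (simp add: floor_eq_iff)
  then show "even_per_ext f x = f \<bar>x\<bar>" by (simp add: even_per_ext_def)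
next
  assume "1 \<le> x" "x < 3"
  then have "\<lfloor>(x + 1) / 2\<rfloor> = 1" by (simp add: floor_eq_iff)
  then show "even_per_ext f x = f \<bar>x - 2\<bar>" by (simp add: even_per_ext_def)
qed

lemma even_per_ext_on_01: "x \<in> {0..1} \<Longrightarrow> even_per_ext f x = f x"
  by (cases "x < 1") (auto simp: even_per_ext_eq)

lemma hder_reflect:
  assumes G: "Ck_on UNIV m G" and U: "open U"
    and refl: "\<And>x. x \<in> U \<Longrightarrow> a - x \<in> U \<and> G (a - x) = G x"
    and "j \<le> m" "x \<in> U"
  shows "hder UNIV j G (a - x) = (-1) ^ j * hder UNIV j G x"
  using assms(4,5)
proof (induction j arbitrary: x)
  case 0
  then show ?case using refl by simp
next
  case (Suc j)
  let ?H = "hder UNIV j G" and ?H' = "hder UNIV (Suc j) G"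
  have j: "j < m" using Suc.prems by simp
  have dH: "(?H has_real_derivative ?H' y) (at y)" for y
    using hder_has_vector_derivative[OF G j, of y]
    unfolding has_real_derivative_iff_has_vector_derivative by simp
  have "((\<lambda>y. ?H (a - y)) has_real_derivative ?H' (a - x) * (-1)) (at x)"
    by (rule DERIV_chain2[OF dH]) (auto intro!: derivative_eq_intros)
  moreover have "((\<lambda>y. ?H (a - y)) has_real_derivative (-1) ^ j * ?H' x) (at x)"
    by (rule has_field_derivative_transform_within_open[OF DERIV_cmult[OF dH] U Suc.prems(2)])
      (use Suc.IH j in auto)
  ultimately have "?H' (a - x) * (-1) = (-1) ^ j * ?H' x"
    by (rule DERIV_unique)
  then show ?case by simp
qed

lemma hder_even_per_ext:
  assumes F: "Ck_on UNIV m (even_per_ext f)" and "i \<le> m" "x \<in> {0..1}"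
  shows "hder {0..1} i f x = hder UNIV i (even_per_ext f) x"
  using assms(2,3)
proof (induction i arbitrary: x)
  case 0
  then show ?case by (simp add: even_per_ext_on_01)
next
  case (Suc i)
  have "(hder UNIV i (even_per_ext f) has_vector_derivative hder UNIV (Suc i) (even_per_ext f) x)
          (at x within {0..1})"
    using hder_has_vector_derivative[OF F, of i x] Suc.prems
    by (simp add: has_vector_derivative_at_within del: hder.simps)
  then have "(hder {0..1} i f has_vector_derivative hder UNIV (Suc i) (even_per_ext f) x)
          (at x within {0..1})"
    by (rule has_vector_derivative_transform_within[where d=1]) (use Suc in auto)
  then show ?case
    using hder_Suc_eqI at_within_Icc_nontrivial[of 0 1 x] Suc.prems by auto
qed

text \<open>The extension is even about 0 and about 1, so its odd derivatives vanish there.\<close>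

lemma Cper_odd_hder_vanish:
  assumes f: "f \<in> Cper \<zeta>" and j: "j < nat \<lfloor>\<zeta>\<rfloor>" "odd j"
  shows "hder {0..1} j f 0 = 0 \<and> hder {0..1} j f 1 = 0"
proof -
  let ?F = "even_per_ext f"
  have F: "Ck_on UNIV (nat \<lfloor>\<zeta>\<rfloor>) ?F"
    using f by (simp add: Cper_def Holder_on_def)
  have "hder UNIV j ?F (0 - 0) = (-1) ^ j * hder UNIV j ?F 0"
    by (rule hder_reflect[OF F, of "{-1<..<1}"]) (use j in \<open>auto simp: even_per_ext_eq\<close>)
  moreover have "hder UNIV j ?F (2 - 1) = (-1) ^ j * hder UNIV j ?F 1"
  proof (rule hder_reflect[OF F, of "{0<..<2}"])
    fix x :: real assume "x \<in> {0<..<2}"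
    then show "2 - x \<in> {0<..<2} \<and> ?F (2 - x) = ?F x"
      by (cases x "1::real" rule: linorder_cases) (auto simp: even_per_ext_eq)
  qed (use j in auto)
  ultimately show ?thesis
    using hder_even_per_ext[OF F, of j] j by simp
qed

lemma Cper_Holder_Neumann:
  assumes "f \<in> Cper \<zeta>" "holder_norm \<zeta> f \<le> ereal M"
  shows "Holder_Neumann (nat \<lfloor>\<zeta>\<rfloor>) (frac \<zeta>) M f"
  using assms Cper_odd_hder_vanish holder_norm_bounds_hder holder_norm_bounds_holder_quotient
  unfolding Holder_Neumann_def Cper_def Holder_on_def by blast

section \<open>Decay of cosine coefficients\<close>

lemma integral_cos_by_parts:
  assumes d: "\<And>x. x \<in> {0..1} \<Longrightarrow> (P has_vector_derivative Q x) (at x within {0..1})"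
    and cP: "continuous_on {0..1} P" and cQ: "continuous_on {0..1} Q"
  shows "real k * pi * integral {0..1} (\<lambda>x. P x * cos (real k * pi * x))
       = - integral {0..1} (\<lambda>x. Q x * sin (real k * pi * x))"
proof -
  let ?w = "real k * pi"
  have "((\<lambda>x. P x * sin (?w * x)) has_vector_derivative
          Q x * sin (?w * x) + ?w * (P x * cos (?w * x))) (at x within {0..1})"
    if "x \<in> {0..1}" for x
  proof -
    have "(P has_real_derivative Q x) (at x within {0..1})"
      using d[OF that] unfolding has_real_derivative_iff_has_vector_derivative .
    then have "((\<lambda>x. P x * sin (?w * x)) has_real_derivative
            Q x * sin (?w * x) + P x * (cos (?w * x) * ?w)) (at x within {0..1})"
      by (auto intro!: derivative_eq_intros)
    then show ?thesis
      by (simp add: has_real_derivative_iff_has_vector_derivative algebra_simps)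
  qed
  then have "((\<lambda>x. Q x * sin (?w * x) + ?w * (P x * cos (?w * x))) has_integral
        P 1 * sin (?w * 1) - P 0 * sin (?w * 0)) {0..1}"
    by (intro fundamental_theorem_of_calculus) auto
  then have "integral {0..1} (\<lambda>x. Q x * sin (?w * x) + ?w * (P x * cos (?w * x))) = 0"
    by (simp add: sin_npi integral_unique)
  moreover have "(\<lambda>x. Q x * sin (?w * x)) integrable_on {0..1}"
    "(\<lambda>x. ?w * (P x * cos (?w * x))) integrable_on {0..1}"
    by (intro integrable_continuous_real continuous_intros cP cQ)+
  ultimately show ?thesis
    by (simp add: integral_add eq_neg_iff_add_eq_0)
qed

lemma integral_sin_by_parts:
  assumes d: "\<And>x. x \<in> {0..1} \<Longrightarrow> (P has_vector_derivative Q x) (at x within {0..1})"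
    and cP: "continuous_on {0..1} P" and cQ: "continuous_on {0..1} Q"
    and "P 0 = 0" "P 1 = 0"
  shows "real k * pi * integral {0..1} (\<lambda>x. P x * sin (real k * pi * x))
       = integral {0..1} (\<lambda>x. Q x * cos (real k * pi * x))"
proof -
  let ?w = "real k * pi"
  have "((\<lambda>x. P x * cos (?w * x)) has_vector_derivative
          Q x * cos (?w * x) - ?w * (P x * sin (?w * x))) (at x within {0..1})"
    if "x \<in> {0..1}" for x
  proof -
    have "(P has_real_derivative Q x) (at x within {0..1})"
      using d[OF that] unfolding has_real_derivative_iff_has_vector_derivative .
    then have "((\<lambda>x. P x * cos (?w * x)) has_real_derivative
            Q x * cos (?w * x) + P x * (- sin (?w * x) * ?w)) (at x within {0..1})"
      by (auto intro!: derivative_eq_intros)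
    then show ?thesis
      by (simp add: has_real_derivative_iff_has_vector_derivative algebra_simps)
  qed
  then have "((\<lambda>x. Q x * cos (?w * x) - ?w * (P x * sin (?w * x))) has_integral
        P 1 * cos (?w * 1) - P 0 * cos (?w * 0)) {0..1}"
    by (intro fundamental_theorem_of_calculus) auto
  then have "integral {0..1} (\<lambda>x. Q x * cos (?w * x) - ?w * (P x * sin (?w * x))) = 0"
    using \<open>P 0 = 0\<close> \<open>P 1 = 0\<close> by (simp add: integral_unique)
  moreover have "(\<lambda>x. Q x * cos (?w * x)) integrable_on {0..1}"
    "(\<lambda>x. ?w * (P x * sin (?w * x))) integrable_on {0..1}"
    by (intro integrable_continuous_real continuous_intros cP cQ)+
  ultimately show ?thesis
    by (simp add: integral_diff)
qed

definition cos_or_sin :: "nat \<Rightarrow> real \<Rightarrow> real" where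
  "cos_or_sin j y = (if even j then cos y else sin y)"

lemma cos_or_sin_add_pi: "cos_or_sin j (y + pi) = - cos_or_sin j y"
  and abs_cos_or_sin_le: "\<bar>cos_or_sin j y\<bar> \<le> 1"
  by (simp_all add: cos_or_sin_def)

lemma continuous_on_cos_or_sin: "continuous_on S (cos_or_sin j)"
  unfolding cos_or_sin_def
  by (cases "even j") (simp_all add: continuous_on_cos continuous_on_sin continuous_on_id)

lemma cos_coeff_by_parts:
  assumes C: "Ck_on {0..1} m f"
    and odd: "\<And>j. j < m \<Longrightarrow> odd j \<Longrightarrow> hder {0..1} j f 0 = 0 \<and> hder {0..1} j f 1 = 0"
    and "j \<le> m"
  shows "\<bar>integral {0..1} (\<lambda>x. f x * cos (real k * pi * x))\<bar> * (real k * pi) ^ j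
       = \<bar>integral {0..1} (\<lambda>x. hder {0..1} j f x * cos_or_sin j (real k * pi * x))\<bar>"
  using \<open>j \<le> m\<close>
proof (induction j)
  case 0
  then show ?case by (simp add: cos_or_sin_def)
next
  case (Suc j)
  let ?I = "\<lambda>j. integral {0..1} (\<lambda>x. hder {0..1} j f x * cos_or_sin j (real k * pi * x))"
  have j: "j < m" using Suc.prems by simp
  note parts = hder_has_vector_derivative[OF C j] C[unfolded Ck_on_def]
  have "\<bar>?I (Suc j)\<bar> = \<bar>real k * pi * ?I j\<bar>"
  proof (cases "even j")
    case True
    then show ?thesis
      using integral_cos_by_parts[of "hder {0..1} j f" "hder {0..1} (Suc j) f" k] parts j
      by (simp add: cos_or_sin_def del: hder.simps)
  next
    case False
    then show ?thesis
      using integral_sin_by_parts[of "hder {0..1} j f" "hder {0..1} (Suc j) f" k] parts j odd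
      by (simp add: cos_or_sin_def del: hder.simps)
  qed
  then show ?case
    using Suc j by (simp add: abs_mult algebra_simps del: hder.simps)
qed

text \<open>The shift by the half-period \<open>h = 1/k\<close> flips the sign of the kernel.\<close>

lemma integral_half_period_shift:
  fixes t g :: "real \<Rightarrow> real"
  assumes tper: "\<And>y. t (y + pi) = - t y" and tc: "continuous_on UNIV t"
    and gc: "continuous_on {0..1} g" and k: "k \<ge> 1"
  defines "h \<equiv> 1 / real k"
  shows "2 * integral {0..1} (\<lambda>x. g x * t (real k * pi * x))
       = integral {0..h} (\<lambda>x. g x * t (real k * pi * x))
         + integral {1-h..1} (\<lambda>x. g x * t (real k * pi * x))
         + integral {h..1} (\<lambda>y. (g y - g (y - h)) * t (real k * pi * y))"
proof -
  define w where "w = real k * pi"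
  have h0: "0 < h" and h1: "h \<le> 1" using k by (auto simp: h_def)
  have wh: "w * h = pi" using k by (simp add: w_def h_def)
  let ?G = "\<lambda>x. g x * t (w * x)" and ?Gs = "\<lambda>y. g (y - h) * t (w * y)"
  have tcw: "continuous_on A (\<lambda>x. t (w * x))" for A
    by (rule continuous_on_compose2[OF tc]) (auto intro!: continuous_intros)
  have iG: "?G integrable_on {a..b}" if "0 \<le> a" "b \<le> 1" for a b
    by (intro integrable_continuous_real continuous_intros tcw continuous_on_subset[OF gc])
      (use that in auto)
  have iGs: "?Gs integrable_on {h..1}"
    by (intro integrable_continuous_real continuous_on_mult tcw continuous_on_compose2[OF gc])
      (use h0 in \<open>auto intro!: continuous_intros\<close>)
  have "integral {h..1} ?Gs = integral {h-h..1-h} (\<lambda>x. g (x + h - h) * t (w * (x + h)))"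
    using integral_shift_real_ivl[of h h 1 ?Gs] by simp
  also have "\<dots> = - integral {0..1-h} ?G"
    by (simp add: distrib_left wh tper)
  finally have "integral {h..1} ?Gs = - integral {0..1-h} ?G" .
  moreover have "integral {h..1} (\<lambda>y. (g y - g (y - h)) * t (w * y))
      = integral {h..1} ?G - integral {h..1} ?Gs"
    unfolding left_diff_distrib by (rule integral_diff) (use iG h0 iGs in auto)
  ultimately show ?thesis
    using Henstock_Kurzweil_Integration.integral_combine[of 0 h 1 ?G]
      Henstock_Kurzweil_Integration.integral_combine[of 0 "1-h" 1 ?G] iG[of 0 1] h0 h1
    unfolding w_def by simp
qed

lemma antiperiodic_integral_holder_bound:
  fixes t g :: "real \<Rightarrow> real"
  assumes tper: "\<And>y. t (y + pi) = - t y" and tb: "\<And>y. \<bar>t y\<bar> \<le> 1"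
    and tc: "continuous_on UNIV t"
    and gc: "continuous_on {0..1} g" and gb: "\<And>x. x \<in> {0..1} \<Longrightarrow> \<bar>g x\<bar> \<le> M"
    and gh: "\<And>x y. x \<in> {0..1} \<Longrightarrow> y \<in> {0..1} \<Longrightarrow> \<bar>g y - g x\<bar> \<le> M * \<bar>y - x\<bar> powr \<delta>"
    and \<delta>: "0 < \<delta>" "\<delta> \<le> 1" and k: "k \<ge> 1"
  shows "\<bar>integral {0..1} (\<lambda>x. g x * t (real k * pi * x))\<bar> \<le> 3/2 * M * real k powr (-\<delta>)"
proof -
  define h where "h = 1 / real k"
  have h0: "0 < h" and h1: "h \<le> 1" using k by (auto simp: h_def)
  have M0: "0 \<le> M" using gb[of 0] by auto
  let ?G = "\<lambda>x. g x * t (real k * pi * x)"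
  let ?H = "\<lambda>y. (g y - g (y - h)) * t (real k * pi * y)"
  have tcw: "continuous_on A (\<lambda>x. t (real k * pi * x))" for A
    by (rule continuous_on_compose2[OF tc]) (auto intro!: continuous_intros)
  have "\<bar>?G x\<bar> \<le> M" if "x \<in> {0..1}" for x
    using mult_mono[OF gb[OF that] tb M0] by (simp add: abs_mult)
  moreover have "continuous_on A ?G" if "A \<subseteq> {0..1}" for A
    by (intro continuous_intros continuous_on_subset[OF gc that] tcw)
  ultimately have "\<bar>integral {0..h} ?G\<bar> \<le> M * h" "\<bar>integral {1-h..1} ?G\<bar> \<le> M * h"
    using integral_bound[of 0 h ?G M] integral_bound[of "1-h" 1 ?G M] h0 h1 by auto
  moreover have "\<bar>integral {h..1} ?H\<bar> \<le> M * h powr \<delta>"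
  proof -
    have "\<bar>?H y\<bar> \<le> M * h powr \<delta>" if "y \<in> {h..1}" for y
    proof -
      have "\<bar>g y - g (y - h)\<bar> \<le> M * h powr \<delta>"
        using gh[of "y - h" y] that h0 by simp
      then show ?thesis
        using mult_mono[OF _ tb, of _ "M * h powr \<delta>"] M0 by (simp add: abs_mult)
    qed
    moreover have "continuous_on {h..1} ?H"
      using h0 by (intro continuous_intros tcw continuous_on_subset[OF gc]
          continuous_on_compose2[OF gc]) auto
    ultimately have "\<bar>integral {h..1} ?H\<bar> \<le> M * h powr \<delta> * (1 - h)"
      using integral_bound[of h 1 ?H "M * h powr \<delta>"] h1 by auto
    also have "\<dots> \<le> M * h powr \<delta>"
      using M0 h0 by (simp add: mult_left_le)
    finally show ?thesis .
  qed
  moreover have "M * h \<le> M * h powr \<delta>"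
    using powr_mono'[of \<delta> 1 h] h0 h1 \<delta> M0 by (simp add: mult_left_mono)
  ultimately have "\<bar>integral {0..1} ?G\<bar> \<le> 3/2 * M * h powr \<delta>"
    using integral_half_period_shift[OF tper tc gc k] unfolding h_def[symmetric] by linarith
  then show ?thesis
    using k by (simp add: h_def powr_minus_divide powr_divide)
qed

lemma Holder_Neumann_cos_coeff_decay:
  assumes f: "Holder_Neumann m \<delta> M f" and \<delta>: "0 \<le> \<delta>" "\<delta> \<le> 1" and k: "k \<ge> 1"
  shows "\<bar>integral {0..1} (\<lambda>x. f x * cos (real k * pi * x))\<bar> \<le> 3/2 * M * real k powr - (real m + \<delta>)"
proof -
  let ?w = "real k * pi" and ?g = "hder {0..1} m f"
  let ?c = "\<bar>integral {0..1} (\<lambda>x. f x * cos (?w * x))\<bar>"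
  have C: "Ck_on {0..1} m f"
    and odd: "\<And>j. j < m \<Longrightarrow> odd j \<Longrightarrow> hder {0..1} j f 0 = 0 \<and> hder {0..1} j f 1 = 0"
    and bnd: "\<And>x. x \<in> {0..1} \<Longrightarrow> \<bar>?g x\<bar> \<le> M"
    and hol: "\<And>x y. 0 < \<delta> \<Longrightarrow> x \<in> {0..1} \<Longrightarrow> y \<in> {0..1} \<Longrightarrow> \<bar>?g y - ?g x\<bar> \<le> M * \<bar>y - x\<bar> powr \<delta>"
    using f by (auto simp: Holder_Neumann_def)
  have M0: "0 \<le> M" using bnd[of 0] by auto
  have k0: "0 < real k" using k by simp
  have cg: "continuous_on {0..1} ?g"
    using C by (simp add: Ck_on_def)
  have "?c * ?w ^ m = \<bar>integral {0..1} (\<lambda>x. ?g x * cos_or_sin m (?w * x))\<bar>"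
    by (rule cos_coeff_by_parts[OF C odd]) auto
  also have "\<dots> \<le> 3/2 * M * real k powr (-\<delta>)"
  proof (cases "\<delta> = 0")
    case True
    have "continuous_on {0..1} (\<lambda>x. ?g x * cos_or_sin m (?w * x))"
      by (intro continuous_on_mult cg continuous_on_compose2[OF continuous_on_cos_or_sin])
        (auto intro!: continuous_intros)
    moreover have "\<bar>?g x * cos_or_sin m (?w * x)\<bar> \<le> M" if "x \<in> {0..1}" for x
      using mult_mono[OF bnd[OF that] abs_cos_or_sin_le] M0 by (simp add: abs_mult)
    ultimately have "\<bar>integral {0..1} (\<lambda>x. ?g x * cos_or_sin m (?w * x))\<bar> \<le> M"
      using integral_bound[of 0 1 "\<lambda>x. ?g x * cos_or_sin m (?w * x)" M] by simp
    then show ?thesis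
      using True M0 k0 by simp
  next
    case False
    then show ?thesis
      using hol \<delta> k
      by (intro antiperiodic_integral_holder_bound cos_or_sin_add_pi abs_cos_or_sin_le
          continuous_on_cos_or_sin cg bnd) auto
  qed
  finally have "?c * ?w ^ m \<le> 3/2 * M * real k powr (-\<delta>)" .
  moreover have "?c * real k ^ m \<le> ?c * ?w ^ m"
    using mult_left_mono[of 1 pi "real k"] pi_ge_two by (intro mult_left_mono power_mono) auto
  ultimately have "?c \<le> 3/2 * M * real k powr (-\<delta>) / real k ^ m"
    using k0 by (simp add: pos_le_divide_eq)
  also have "\<dots> = 3/2 * M * (real k powr (-\<delta>) / real k powr real m)"
    using k0 by (simp add: powr_realpow)
  also have "\<dots> = 3/2 * M * real k powr - (real m + \<delta>)"
    by (simp add: powr_diff[symmetric] algebra_simps)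
  finally show ?thesis .
qed

lemma Holder_Neumann_ebasis_coeff:
  assumes f: "Holder_Neumann m \<delta> M f" and \<delta>: "0 \<le> \<delta>" "\<delta> \<le> 1"
  shows "\<bar>l2_inner f (ebasis k)\<bar> \<le> 3 * 2 powr (real m + \<delta>) * M * (real k + 1) powr - (real m + \<delta>)"
proof -
  let ?\<zeta> = "real m + \<delta>"
  have bnd: "\<And>x. x \<in> {0..1} \<Longrightarrow> \<bar>f x\<bar> \<le> M" and cf: "continuous_on {0..1} f"
    using f by (auto simp: Holder_Neumann_def Ck_on_def)
  have M0: "0 \<le> M" using bnd[of 0] by auto
  have two: "1 \<le> 2 powr ?\<zeta>"
    using \<delta> by (intro ge_one_powr_ge_zero) auto
  show ?thesis
  proof (cases "k = 0")
    case True
    have "\<bar>integral {0..1} f\<bar> \<le> M"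
      using integral_bound[of 0 1 f M] cf bnd by simp
    also have "\<dots> \<le> 3 * 2 powr ?\<zeta> * M"
      using mult_right_mono[of 1 "3 * 2 powr ?\<zeta>" M] two M0 by simp
    finally show ?thesis
      using True by (simp add: l2_inner_def ebasis_def)
  next
    case False
    then have k: "k \<ge> 1" and k0: "0 < real k" by auto
    have "l2_inner f (ebasis k) = sqrt 2 * integral {0..1} (\<lambda>x. f x * cos (real k * pi * x))"
      using False by (simp add: l2_inner_def ebasis_def algebra_simps flip: integral_mult_right)
    then have "\<bar>l2_inner f (ebasis k)\<bar> = sqrt 2 * \<bar>integral {0..1} (\<lambda>x. f x * cos (real k * pi * x))\<bar>"
      by (simp add: abs_mult)
    also have "\<dots> \<le> 2 * (3/2 * M * real k powr - ?\<zeta>)"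
      using Holder_Neumann_cos_coeff_decay[OF f \<delta> k] sqrt2_less_2 by (intro mult_mono) auto
    also have "real k powr - ?\<zeta> \<le> 2 powr ?\<zeta> * (real k + 1) powr - ?\<zeta>"
    proof -
      have "(1 / real k) powr ?\<zeta> \<le> (2 / (real k + 1)) powr ?\<zeta>"
        using k \<delta> by (intro powr_mono2) (auto simp: field_simps)
      then show ?thesis
        unfolding powr_minus_divide using k0 by (simp add: powr_divide)
    qed
    finally show ?thesis
      using M0 by (simp add: mult_right_mono mult_ac)
  qed
qed

lemma square_ebasis_coeff_bound:
  assumes g: "g \<in> Cper \<gamma>" "holder_norm \<gamma> g \<le> ereal K" and "0 \<le> \<gamma>"
  shows "\<bar>l2_inner (\<lambda>x. (g x)\<^sup>2) (ebasis k)\<bar>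
           \<le> 6 * 2 powr \<gamma> * (2 ^ (nat \<lfloor>\<gamma>\<rfloor> + 1) * K\<^sup>2) / (1 + (real k + 1) powr \<gamma>)"
proof -
  let ?M = "2 ^ (nat \<lfloor>\<gamma>\<rfloor> + 1) * K\<^sup>2"
  have \<gamma>: "real (nat \<lfloor>\<gamma>\<rfloor>) + frac \<gamma> = \<gamma>"
    using \<open>0 \<le> \<gamma>\<close> by (simp add: frac_def)
  have "Holder_Neumann (nat \<lfloor>\<gamma>\<rfloor>) (frac \<gamma>) ?M (\<lambda>x. g x * g x)"
    using Holder_Neumann_square[OF Cper_Holder_Neumann[OF g]] frac_lt_1[of \<gamma>] by simp
  from Holder_Neumann_ebasis_coeff[OF this frac_ge_0, of k] frac_lt_1[of \<gamma>]
  have "\<bar>l2_inner (\<lambda>x. (g x)\<^sup>2) (ebasis k)\<bar> \<le> 3 * 2 powr \<gamma> * ?M * (real k + 1) powr - \<gamma>"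
    unfolding \<gamma> by (simp add: power2_eq_square)
  also have "(real k + 1) powr - \<gamma> \<le> 2 / (1 + (real k + 1) powr \<gamma>)"
  proof -
    have "1 \<le> (real k + 1) powr \<gamma>"
      using \<open>0 \<le> \<gamma>\<close> by (intro ge_one_powr_ge_zero) auto
    then show ?thesis
      by (simp add: powr_minus divide_simps)
  qed
  finally show ?thesis
    by (simp add: mult_left_mono)
qed

section \<open>Testing against the unit ball of a periodic Holder space\<close>

lemma hder_const_0:
  assumes S: "\<And>x. x \<in> S \<Longrightarrow> at x within S \<noteq> bot" and "x \<in> S"
  shows "hder S i (\<lambda>_. 0) x = 0"
  using \<open>x \<in> S\<close>
proof (induction i arbitrary: x)
  case (Suc i)
  have "(hder S i (\<lambda>_. 0) has_vector_derivative 0) (at x within S)"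
    by (rule has_vector_derivative_transform_within[OF has_vector_derivative_const, where d=1])
      (use Suc in auto)
  then show ?case
    using hder_Suc_eqI S Suc.prems by blast
qed simp

lemma Ck_on_const_0:
  assumes S: "\<And>x. x \<in> S \<Longrightarrow> at x within S \<noteq> bot"
  shows "Ck_on S m (\<lambda>_. 0)"
  unfolding Ck_on_def
proof (intro conjI allI impI ballI)
  fix i
  show "continuous_on S (hder S i (\<lambda>_. 0))"
    using continuous_on_const[of S 0] by (rule continuous_on_cong[THEN iffD1, rotated 2])
      (use hder_const_0[OF S] in auto)
  fix x assume "x \<in> S"
  have "(hder S i (\<lambda>_. 0) has_vector_derivative 0) (at x within S)"
    by (rule has_vector_derivative_transform_within[OF has_vector_derivative_const, where d=1])
      (use hder_const_0[OF S] \<open>x \<in> S\<close> in auto)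
  then show "hder S i (\<lambda>_. 0) differentiable at x within S"
    by (rule differentiableI_vector)
qed

lemma holder_norm_on_const_0:
  assumes S: "\<And>x. x \<in> S \<Longrightarrow> at x within S \<noteq> bot"
  shows "holder_norm_on S \<zeta> (\<lambda>_. 0) \<le> 0"
proof -
  have "sup_norm_on S (hder S i (\<lambda>_. 0)) \<le> 0" for i
    unfolding sup_norm_on_def by (rule SUP_least) (simp add: hder_const_0[OF S])
  then have "(\<Sum>i\<le>nat \<lfloor>\<zeta>\<rfloor>. sup_norm_on S (hder S i (\<lambda>_. 0))) \<le> 0"
    by (intro sum_nonpos)
  moreover have "holder_semi S d (hder S i (\<lambda>_. 0)) \<le> 0" for d i
    unfolding holder_semi_def by (rule SUP_least) (auto simp: hder_const_0[OF S])
  ultimately show ?thesis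
    unfolding holder_norm_on_def by (intro add_nonpos_nonpos) auto
qed

lemma zero_in_Cper: "(\<lambda>_. 0) \<in> Cper \<zeta>" and holder_norm_const_0: "holder_norm \<zeta> (\<lambda>_. 0) \<le> 1"
proof -
  have I: "\<And>x. x \<in> {0..1} \<Longrightarrow> at x within {0..1::real} \<noteq> bot"
    by (rule at_within_Icc_nontrivial) simp
  have U: "\<And>x. x \<in> UNIV \<Longrightarrow> at x within (UNIV :: real set) \<noteq> bot"
    by simp
  have "even_per_ext (\<lambda>_. 0) = (\<lambda>_. 0)"
    by (simp add: even_per_ext_def fun_eq_iff)
  moreover have "x \<le> 0 \<Longrightarrow> x \<noteq> \<infinity>" for x :: ereal
    by auto
  ultimately show "(\<lambda>_. 0) \<in> Cper \<zeta>"
    using Ck_on_const_0[OF I] Ck_on_const_0[OF U] holder_norm_on_const_0[OF I, of \<zeta>]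
      holder_norm_on_const_0[OF U, of \<zeta>]
    unfolding Cper_def Holder_on_def by simp
  have "holder_norm \<zeta> (\<lambda>_. 0) \<le> 0"
    using holder_norm_on_const_0[OF I, of \<zeta>] by (simp add: holder_norm_def)
  also have "(0::ereal) \<le> 1"
    by simp
  finally show "holder_norm \<zeta> (\<lambda>_. 0) \<le> 1" .
qed

definition dual_Holder :: "real \<Rightarrow> real \<Rightarrow> (real \<Rightarrow> real) \<Rightarrow> real" where
  "dual_Holder \<alpha> \<zeta> w = Sup {\<bar>l2_inner w \<phi>\<bar> powr \<alpha> | \<phi>. \<phi> \<in> Cper \<zeta> \<and> holder_norm \<zeta> \<phi> \<le> 1}"

lemma mult_dual_Holder_le:
  assumes "\<And>\<phi>. \<phi> \<in> Cper \<zeta> \<Longrightarrow> holder_norm \<zeta> \<phi> \<le> 1 \<Longrightarrow> \<bar>l2_inner w \<phi>\<bar> powr \<alpha> \<le> B"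
  shows "\<kappa> * dual_Holder \<alpha> \<zeta> w \<le> \<bar>\<kappa>\<bar> * B"
proof -
  let ?X = "{\<bar>l2_inner w \<phi>\<bar> powr \<alpha> | \<phi>. \<phi> \<in> Cper \<zeta> \<and> holder_norm \<zeta> \<phi> \<le> 1}"
  have zero: "\<bar>l2_inner w (\<lambda>_. 0)\<bar> powr \<alpha> \<in> ?X"
    using zero_in_Cper holder_norm_const_0 by blast
  have bdd: "bdd_above ?X"
    by (rule bdd_aboveI[where M = B]) (use assms in blast)
  have "0 \<le> Sup ?X"
    using cSup_upper[OF zero bdd] by (rule order_trans[OF powr_ge_zero])
  moreover have "Sup ?X \<le> B"
    by (rule cSup_least) (use zero assms in blast)+
  ultimately have "\<kappa> * Sup ?X \<le> \<bar>\<kappa>\<bar> * B"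
    by (meson abs_ge_self abs_ge_zero mult_left_mono mult_right_mono order_trans)
  then show ?thesis
    by (simp add: dual_Holder_def)
qed

lemma abs_l2_inner_le_sup:
  assumes w: "continuous_on {0..1} w" "\<And>x. x \<in> {0..1} \<Longrightarrow> \<bar>w x\<bar> \<le> e"
    and \<phi>: "\<phi> \<in> Cper \<zeta>" "holder_norm \<zeta> \<phi> \<le> 1"
  shows "\<bar>l2_inner w \<phi>\<bar> \<le> e"
proof -
  have "continuous_on {0..1} \<phi>"
    using \<phi>(1) by (auto simp: Cper_def Holder_on_def Ck_on_def)
  moreover have "\<bar>w x * \<phi> x\<bar> \<le> e" if "x \<in> {0..1}" for x
  proof -
    have "\<bar>\<phi> x\<bar> \<le> 1"
      using holder_norm_bounds_hder[of \<zeta> \<phi> 1 0 x] \<phi>(2) that by (simp add: one_ereal_def)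
    moreover have "0 \<le> e"
      using order_trans[OF abs_ge_zero w(2)[OF that]] .
    ultimately show ?thesis
      using mult_mono[OF w(2)[OF that], of "\<bar>\<phi> x\<bar>" 1] by (simp add: abs_mult)
  qed
  ultimately show ?thesis
    using integral_bound[of 0 1 "\<lambda>x. w x * \<phi> x" e] w(1) by (simp add: l2_inner_def continuous_on_mult)
qed

lemma abs_l2_inner_ebasis_le:
  assumes "\<phi> \<in> Cper \<zeta>" "holder_norm \<zeta> \<phi> \<le> 1" "0 \<le> \<zeta>"
  shows "\<bar>l2_inner \<phi> (ebasis k)\<bar> \<le> 3 * 2 powr \<zeta> * (real k + 1) powr - \<zeta>"
proof -
  have \<zeta>: "real (nat \<lfloor>\<zeta>\<rfloor>) + frac \<zeta> = \<zeta>"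
    using \<open>0 \<le> \<zeta>\<close> by (simp add: frac_def)
  have "Holder_Neumann (nat \<lfloor>\<zeta>\<rfloor>) (frac \<zeta>) 1 \<phi>"
    using Cper_Holder_Neumann[of \<phi> \<zeta> 1] assms by (simp add: one_ereal_def)
  from Holder_Neumann_ebasis_coeff[OF this frac_ge_0, of k] frac_lt_1[of \<zeta>]
  show ?thesis
    unfolding \<zeta> by simp
qed

lemma l2_norm_nonneg: "0 \<le> l2_norm f"
proof -
  have "0 \<le> integral {0..1} (\<lambda>x. (f x)\<^sup>2)"
    by (cases "(\<lambda>x. (f x)\<^sup>2) integrable_on {0..1}") (simp_all add: integral_nonneg not_integrable_integral)
  then show ?thesis
    by (simp add: l2_norm_def)
qed

lemma l2_norm_tendsto_0_of_dual_Holder_bound: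
  assumes H: "\<forall>u v. continuous_on {0..1} u \<longrightarrow> continuous_on {0..1} v \<longrightarrow>
                 l2_norm (\<lambda>x. A u x - A v x) \<le> \<kappa> * dual_Holder \<alpha> \<zeta> (\<lambda>x. u x - v x)"
    and "0 < \<alpha>"
    and un: "\<And>n. continuous_on {0..1} (un n)" and u: "continuous_on {0..1} u"
    and lim: "uniform_limit {0..1} un u sequentially"
  shows "(\<lambda>n. l2_norm (\<lambda>x. A (un n) x - A u x)) \<longlonglongrightarrow> 0"
proof (rule LIMSEQ_I)
  fix r :: real assume "0 < r"
  define e where "e = (r / (\<bar>\<kappa>\<bar> + 1)) powr (1 / \<alpha>)"
  have "0 < e"
    using \<open>0 < r\<close> by (simp add: e_def add_pos_nonneg)
  have "\<bar>\<kappa>\<bar> * e powr \<alpha> = r * (\<bar>\<kappa>\<bar> / (\<bar>\<kappa>\<bar> + 1))"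
    using \<open>0 < r\<close> \<open>0 < \<alpha>\<close> by (simp add: e_def powr_powr add_pos_nonneg)
  also have "\<dots> < r * 1"
    using \<open>0 < r\<close> by (intro mult_strict_left_mono) auto
  finally have small: "\<bar>\<kappa>\<bar> * e powr \<alpha> < r" by simp
  obtain N where N: "\<And>n x. n \<ge> N \<Longrightarrow> x \<in> {0..1} \<Longrightarrow> \<bar>un n x - u x\<bar> < e"
    using uniform_limitD[OF lim \<open>0 < e\<close>] unfolding eventually_sequentially dist_real_def
    by blast
  have "l2_norm (\<lambda>x. A (un n) x - A u x) < r" if "n \<ge> N" for n
  proof -
    have "l2_norm (\<lambda>x. A (un n) x - A u x) \<le> \<kappa> * dual_Holder \<alpha> \<zeta> (\<lambda>x. un n x - u x)"
      using H un u by blast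
    also have "\<dots> \<le> \<bar>\<kappa>\<bar> * e powr \<alpha>"
    proof (rule mult_dual_Holder_le)
      fix \<phi> assume "\<phi> \<in> Cper \<zeta>" "holder_norm \<zeta> \<phi> \<le> 1"
      then have "\<bar>l2_inner (\<lambda>x. un n x - u x) \<phi>\<bar> \<le> e"
        using N[OF that] un[of n] u by (intro abs_l2_inner_le_sup) (auto intro!: continuous_intros less_imp_le)
      then show "\<bar>l2_inner (\<lambda>x. un n x - u x) \<phi>\<bar> powr \<alpha> \<le> e powr \<alpha>"
        using \<open>0 < \<alpha>\<close> by (intro powr_mono2) auto
    qed
    finally show ?thesis
      using small by linarith
  qed
  then show "\<exists>N. \<forall>n\<ge>N. norm (l2_norm (\<lambda>x. A (un n) x - A u x) - 0) < r"
    using l2_norm_nonneg by auto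
qed

lemma l2_norm_ebasis_perturbation_le:
  assumes H: "\<forall>u v. continuous_on {0..1} u \<longrightarrow> continuous_on {0..1} v \<longrightarrow>
                 l2_norm (\<lambda>x. A u x - A v x) \<le> \<kappa> * dual_Holder \<alpha> (\<beta> / \<alpha>) (\<lambda>x. u x - v x)"
    and "0 < \<alpha>" "0 < \<beta>" and u: "continuous_on {0..1} u"
  shows "l2_norm (\<lambda>x. A (\<lambda>y. u y + h * ebasis k y) x - A u x)
           \<le> \<bar>\<kappa>\<bar> * (3 * 2 powr (\<beta> / \<alpha>)) powr \<alpha> * \<bar>h\<bar> powr \<alpha> * (real k + 1) powr (- \<beta>)"
proof -
  let ?C = "3 * 2 powr (\<beta> / \<alpha>)" and ?v = "\<lambda>y. u y + h * ebasis k y"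
  have "continuous_on {0..1} (ebasis k)"
    unfolding ebasis_def by (cases "k = 0") (simp_all add: continuous_intros)
  then have "l2_norm (\<lambda>x. A ?v x - A u x) \<le> \<kappa> * dual_Holder \<alpha> (\<beta> / \<alpha>) (\<lambda>x. ?v x - u x)"
    using H u by (simp only: continuous_on_add continuous_on_mult continuous_on_const)
  also have "\<dots> \<le> \<bar>\<kappa>\<bar> * (\<bar>h\<bar> powr \<alpha> * ?C powr \<alpha> * (real k + 1) powr (- \<beta>))"
  proof (rule mult_dual_Holder_le)
    fix \<phi> assume \<phi>: "\<phi> \<in> Cper (\<beta> / \<alpha>)" "holder_norm (\<beta> / \<alpha>) \<phi> \<le> 1"
    have "l2_inner (\<lambda>x. ?v x - u x) \<phi> = h * l2_inner \<phi> (ebasis k)"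
      by (simp add: l2_inner_def algebra_simps flip: integral_mult_right)
    then have "\<bar>l2_inner (\<lambda>x. ?v x - u x) \<phi>\<bar> \<le> \<bar>h\<bar> * (?C * (real k + 1) powr - (\<beta> / \<alpha>))"
      using abs_l2_inner_ebasis_le[OF \<phi>] \<open>0 < \<alpha>\<close> \<open>0 < \<beta>\<close> by (simp add: abs_mult mult_left_mono)
    then have "\<bar>l2_inner (\<lambda>x. ?v x - u x) \<phi>\<bar> powr \<alpha> \<le> (\<bar>h\<bar> * (?C * (real k + 1) powr - (\<beta> / \<alpha>))) powr \<alpha>"
      using \<open>0 < \<alpha>\<close> by (intro powr_mono2) auto
    also have "\<dots> = \<bar>h\<bar> powr \<alpha> * ?C powr \<alpha> * (real k + 1) powr (- \<beta>)"
      using \<open>0 < \<alpha>\<close> by (simp add: powr_mult powr_powr)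
    finally show "\<bar>l2_inner (\<lambda>x. ?v x - u x) \<phi>\<bar> powr \<alpha> \<le> \<bar>h\<bar> powr \<alpha> * ?C powr \<alpha> * (real k + 1) powr (- \<beta>)" .
  qed
  finally show ?thesis
    by (simp add: mult_ac)
qed

theorem proposition9p3:
  shows "(\<forall>\<gamma>>0. \<forall>\<kappa>3'::real. \<exists>\<kappa>3::real. \<forall>A :: (real \<Rightarrow> real) \<Rightarrow> (real \<Rightarrow> real).
            (\<forall>u. continuous_on {0..1} u \<longrightarrow>
                 A u \<in> Cper \<gamma> \<and> holder_norm \<gamma> (A u) \<le> ereal \<kappa>3')
            \<longrightarrow> (\<forall>u k. continuous_on {0..1} u \<longrightarrow>
                 \<bar>l2_inner (\<lambda>x. (A u x)^2) (ebasis k)\<bar> \<le> \<kappa>3 / (1 + (real k + 1) powr \<gamma>)))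
       \<and> (\<forall>\<alpha>>0. \<forall>\<beta>>0. \<forall>\<kappa>1'::real. \<exists>\<kappa>1::real. \<forall>A :: (real \<Rightarrow> real) \<Rightarrow> (real \<Rightarrow> real).
            (\<forall>u v. continuous_on {0..1} u \<longrightarrow> continuous_on {0..1} v \<longrightarrow>
                 l2_norm (\<lambda>x. A u x - A v x) \<le>
                   \<kappa>1' * Sup {\<bar>l2_inner (\<lambda>x. u x - v x) \<phi>\<bar> powr \<alpha> | \<phi>.
                              \<phi> \<in> Cper (\<beta> / \<alpha>) \<and> holder_norm (\<beta> / \<alpha>) \<phi> \<le> 1})
            \<longrightarrow> ((\<forall>un u. (\<forall>n. continuous_on {0..1} (un n)) \<and> continuous_on {0..1} u \<and>
                          uniform_limit {0..1} un u sequentially \<longrightarrow>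
                          (\<lambda>n. l2_norm (\<lambda>x. A (un n) x - A u x)) \<longlonglongrightarrow> 0)
               \<and> (\<forall>u k h. continuous_on {0..1} u \<longrightarrow>
                    l2_norm (\<lambda>x. A (\<lambda>y. u y + h * ebasis k y) x - A u x)
                      \<le> \<kappa>1 * \<bar>h\<bar> powr \<alpha> * (real k + 1) powr (- \<beta>))))"
  unfolding dual_Holder_def[symmetric]
  apply (intro conjI allI impI)
  subgoal for \<gamma> \<kappa>3'
    by (intro exI[of _ "6 * 2 powr \<gamma> * (2 ^ (nat \<lfloor>\<gamma>\<rfloor> + 1) * \<kappa>3'\<^sup>2)"] allI impI)
      (rule square_ebasis_coeff_bound; auto)
  subgoal for \<alpha> \<beta> \<kappa>1'
    apply (intro exI[of _ "\<bar>\<kappa>1'\<bar> * (3 * 2 powr (\<beta> / \<alpha>)) powr \<alpha>"] allI impI conjI)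
    subgoal for A un u
      by (rule l2_norm_tendsto_0_of_dual_Holder_bound[where A = A and un = un and u = u]) auto
    subgoal for A u
      by (rule l2_norm_ebasis_perturbation_le) auto
    done
  done

end
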